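(* Let $R$ be a ring (associative with identity) and let $F$ be a free right $R$-module isomorphic to the direct sum of $\alpha$ copies of $R$, where $\alpha\geq 2$ is a (finite or infinite) cardinal number. Then the endomorphism ring $\mathrm{End}_R(F)$ is 2-clean.
   Context: For a positive integer $n$, an element $a$ of a ring $S$ is called $n$-clean if $a=e+u_1+\cdots+u_n$ for some idempotent $e=e^2\in S$ and units $u_1,\dots,u_n$ of $S$; a ring is $n$-clean if each of its elements is $n$-clean. All rings are associative with identity and modules are unitary. *)

theory Defs
  imports "HOL-Algebra.Ring" "HOL-Algebra.FiniteProduct" "HOL-Library.FuncSet"
begin

definition n_clean_elem :: "nat \<Rightarrow> ('c, 'm) ring_scheme \<Rightarrow> 'c \<Rightarrow> bool" where
  "n_clean_elem n S a \<longleftrightarrow>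
     (\<exists>e \<in> carrier S. e \<otimes>\<^bsub>S\<^esub> e = e \<and>
        (\<exists>u. (\<forall>k<n. u k \<in> Units S) \<and>
             a = e \<oplus>\<^bsub>S\<^esub> (\<Oplus>\<^bsub>S\<^esub>k\<in>{..<n}. u k)))"

definition n_clean_ring :: "nat \<Rightarrow> ('c, 'm) ring_scheme \<Rightarrow> bool" where
  "n_clean_ring n S \<longleftrightarrow> (\<forall>a \<in> carrier S. n_clean_elem n S a)"

text \<open>The free right R-module R^(I): finitely supported functions I -> R,
  with the index set given by the type 'i.\<close>

definition free_mod :: "('i \<Rightarrow> 'a::ring_1) set" where
  "free_mod = {x. finite {i. x i \<noteq> 0}}"

definition is_right_endo :: "(('i \<Rightarrow> 'a::ring_1) \<Rightarrow> ('i \<Rightarrow> 'a)) \<Rightarrow> bool" where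
  "is_right_endo f \<longleftrightarrow>
     (\<forall>x \<in> free_mod. f x \<in> free_mod) \<and>
     (\<forall>x \<in> free_mod. \<forall>y \<in> free_mod. f (\<lambda>i. x i + y i) = (\<lambda>i. f x i + f y i)) \<and>
     (\<forall>x \<in> free_mod. \<forall>r. f (\<lambda>i. x i * r) = (\<lambda>i. f x i * r))"

definition End_ring :: "(('i \<Rightarrow> 'a::ring_1) \<Rightarrow> ('i \<Rightarrow> 'a)) ring" where
  "End_ring =
     \<lparr> carrier = {f. is_right_endo f \<and> f \<in> extensional free_mod},
       mult = (\<lambda>f g. restrict (\<lambda>x. f (g x)) free_mod),
       one = restrict (\<lambda>x. x) free_mod,
       zero = restrict (\<lambda>x. (\<lambda>i. 0)) free_mod,
       add = (\<lambda>f g. restrict (\<lambda>x. (\<lambda>i. f x i + g x i)) free_mod) \<rparr>"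

end

theory Submission
  imports Defs "HOL-Library.Equipollence"
begin

text \<open>Split the index set into \<open>G\<close>, \<open>R\<close>, \<open>Q\<close> with \<open>|G| = |Q|\<close> and \<open>|R| \<le> |Q|\<close>: an infinite
  set is equipotent to two copies of itself, and a finite one can be halved with at most one
  index left over (this is where two indices are needed). Coordinate projections and partial
  permutation matrices then give orthogonal idempotents \<open>g + r + q = 1\<close> of \<open>End(F)\<close>, with
  \<open>\<sigma>, \<tau>\<close> realising \<open>g \<cong> q\<close> and \<open>\<alpha>, \<beta>\<close> realising \<open>r\<close> as a direct summand of \<open>q\<close>.

  In any ring with such data, put \<open>p = g + r\<close>. Every \<open>A\<close> is the sum of the idempotent
  \<open>e = p + (pAq - \<sigma>)\<close>, of \<open>u = (1 + \<delta>\<tau>)(X + \<sigma> + \<tau>)\<close> with \<open>\<delta> = qAq - q\<close>, and of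
  \<open>v = V + (qAp - \<tau> - \<delta>\<tau>X)\<close>. Here \<open>V = swap + r(A - 2)r\<close> is a unit, \<open>swap\<close> being the
  involution exchanging \<open>r\<close> with the summand \<open>\<sigma>\<beta>\<alpha>\<tau>\<close> of \<open>g\<close>; the correction \<open>r(A - 2)r\<close>
  makes \<open>X = pAp - p - (V - q)\<close> have \<open>r\<close>-corner \<open>r\<close>, so \<open>X + \<sigma> + \<tau>\<close> is invertible by block
  elimination; and \<open>\<delta>\<tau>\<close> and the summand \<open>qAp - \<tau> - \<delta>\<tau>X \<in> qSp\<close> of \<open>v\<close> are square-zero
  perturbations.\<close>

definition is_invertible :: "'a::ring_1 \<Rightarrow> bool" where
  "is_invertible u \<longleftrightarrow> (\<exists>v. u * v = 1 \<and> v * u = 1)"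

lemma is_invertibleI: "u * v = 1 \<Longrightarrow> v * u = 1 \<Longrightarrow> is_invertible u"
  unfolding is_invertible_def by blast

lemma is_invertible_mult:
  assumes "is_invertible a" "is_invertible b"
  shows "is_invertible (a * b)"
proof -
  obtain a' b' where "a * a' = 1" "a' * a = 1" "b * b' = 1" "b' * b = 1"
    using assms unfolding is_invertible_def by blast
  then have "a * b * (b' * a') = 1" "b' * a' * (a * b) = 1"
    by (metis mult.assoc mult_1_left)+
  then show ?thesis by (rule is_invertibleI)
qed

lemma is_invertible_one_plus_square_zero: "n * n = 0 \<Longrightarrow> is_invertible (1 + n)"
  by (rule is_invertibleI[of _ "1 - n"]) (simp_all add: algebra_simps)

lemma is_invertible_add_square_zero:
  assumes "is_invertible u" "u' * u = 1" "u' * n = n" "n * n = 0"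
  shows "is_invertible (u + n)"
proof -
  have "u + n = (1 + n * u') * u"
    using assms(2) by (simp add: algebra_simps mult.assoc)
  moreover have "(n * u') * (n * u') = 0"
    using assms(3,4) by (metis mult.assoc mult_zero_left)
  ultimately show ?thesis
    using assms(1) is_invertible_mult is_invertible_one_plus_square_zero by metis
qed

lemma orthogonal_support_mult_eq_0:
  "x * e = x \<Longrightarrow> e' * y = y \<Longrightarrow> e * e' = 0 \<Longrightarrow> x * y = (0::'a::ring)"
  by (metis mult.assoc mult_zero_left mult_zero_right)

text \<open>Lets the simplifier use a relation \<open>x * y = z\<close> inside the right-associated
  products produced by \<open>algebra_simps\<close>.\<close>

lemma mult_eq_imp_mult_assoc_eq: "x * y = z \<Longrightarrow> x * (y * w) = z * (w::'a::semigroup_mult)"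
  by (simp add: mult.assoc[symmetric])

locale idempotent_frame =
  fixes g r q \<sigma> \<tau> \<alpha> \<beta> :: "'a::ring_1"
  assumes idempotents: "g * g = g" "r * r = r" "q * q = q"
    and orthogonal: "g * r = 0" "r * g = 0" "g * q = 0" "q * g = 0" "r * q = 0" "q * r = 0"
    and sum_one: "g + r + q = 1"
    and left_support: "g * \<sigma> = \<sigma>" "q * \<tau> = \<tau>" "r * \<alpha> = \<alpha>" "q * \<beta> = \<beta>"
    and right_support: "\<sigma> * q = \<sigma>" "\<tau> * g = \<tau>" "\<alpha> * q = \<alpha>" "\<beta> * r = \<beta>"
    and iso: "\<sigma> * \<tau> = g" "\<tau> * \<sigma> = q" "\<alpha> * \<beta> = r"
begin

lemma zero_products:
  "g * \<tau> = 0" "g * \<alpha> = 0" "g * \<beta> = 0" "r * \<sigma> = 0" "r * \<tau> = 0" "r * \<beta> = 0"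
  "q * \<sigma> = 0" "q * \<alpha> = 0" "\<sigma> * g = 0" "\<sigma> * r = 0" "\<sigma> * \<sigma> = 0" "\<sigma> * \<alpha> = 0"
  "\<tau> * r = 0" "\<tau> * q = 0" "\<tau> * \<tau> = 0" "\<tau> * \<alpha> = 0" "\<tau> * \<beta> = 0"
  "\<alpha> * g = 0" "\<alpha> * r = 0" "\<alpha> * \<sigma> = 0" "\<alpha> * \<alpha> = 0"
  "\<beta> * g = 0" "\<beta> * q = 0" "\<beta> * \<sigma> = 0" "\<beta> * \<tau> = 0" "\<beta> * \<beta> = 0"
  by (rule orthogonal_support_mult_eq_0, rule idempotents right_support,
      rule idempotents left_support, rule orthogonal)+

lemmas relations = idempotents orthogonal left_support right_support iso zero_products
lemmas frame_simps = relations relations[THEN mult_eq_imp_mult_assoc_eq]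

lemma invertible_g_corner: "is_invertible (g * W * g + r + \<sigma> + \<tau>)"
proof (rule is_invertibleI)
  let ?v = "\<sigma> + \<tau> - \<tau> * W * \<sigma> + r"
  show "(g * W * g + r + \<sigma> + \<tau>) * ?v = 1" "?v * (g * W * g + r + \<sigma> + \<tau>) = 1"
    by (simp_all add: frame_simps algebra_simps flip: sum_one)
qed

lemma invertible_p_block_r_corner:
  "is_invertible (g * X * g + g * X * r + r * X * g + r + \<sigma> + \<tau>)"
proof -
  have "g * X * g + g * X * r + r * X * g + r + \<sigma> + \<tau> =
    (1 + g * X * r) * (g * (X - X * r * X) * g + r + \<sigma> + \<tau>) * (1 + r * X * g)"
    by (simp add: frame_simps algebra_simps)
  moreover have "is_invertible (1 + g * X * r)" "is_invertible (1 + r * X * g)"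
    by (rule is_invertible_one_plus_square_zero, simp add: frame_simps algebra_simps)+
  ultimately show ?thesis
    using invertible_g_corner is_invertible_mult by metis
qed

definition swap :: 'a where
  "swap = 1 - r - \<sigma> * \<beta> * \<alpha> * \<tau> + \<sigma> * \<beta> + \<alpha> * \<tau>"

lemma swap_swap: "swap * swap = 1"
  unfolding swap_def by (simp add: frame_simps algebra_simps)

lemma swap_plus_corner_eq: "swap + r * T * r = (1 + r * T * r * (\<alpha> * \<tau>)) * swap"
  unfolding swap_def by (simp add: frame_simps algebra_simps)

lemma invertible_swap_plus_corner: "is_invertible (swap + r * T * r)"
  unfolding swap_plus_corner_eq
proof (rule is_invertible_mult)
  show "is_invertible (1 + r * T * r * (\<alpha> * \<tau>))"
    by (rule is_invertible_one_plus_square_zero) (simp add: frame_simps algebra_simps)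
  show "is_invertible swap"
    by (rule is_invertibleI[OF swap_swap swap_swap])
qed

theorem idempotent_plus_two_invertibles:
  "\<exists>e u v. e * e = e \<and> is_invertible u \<and> is_invertible v \<and> (A::'a) = e + u + v"
proof -
  define p where "p = g + r"
  define T where "T = A - 2"
  define V where "V = swap + r * T * r"
  define X where "X = p * A * p - p - (V - q)"
  define \<delta> where "\<delta> = q * A * q - q"
  define e where "e = p + (p * A * q - \<sigma>)"
  define u where "u = (1 + \<delta> * \<tau>) * (X + \<sigma> + \<tau>)"
  define n where "n = q * A * p - \<tau> - \<delta> * \<tau> * X"
  have X_frame: "X = g * X * g + g * X * r + r * X * g + r"
    unfolding X_def V_def swap_def T_def p_def
    by (simp add: frame_simps algebra_simps mult_2 mult_2_right flip: sum_one)
  have "e * e = e"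
    unfolding e_def p_def by (simp add: frame_simps algebra_simps)
  moreover have "is_invertible u"
    unfolding u_def
  proof (rule is_invertible_mult)
    show "is_invertible (1 + \<delta> * \<tau>)"
      by (rule is_invertible_one_plus_square_zero) (simp add: \<delta>_def frame_simps algebra_simps)
    show "is_invertible (X + \<sigma> + \<tau>)"
      using invertible_p_block_r_corner[of X] X_frame by metis
  qed
  moreover have "is_invertible (V + n)"
  proof (rule is_invertible_add_square_zero)
    show "is_invertible V"
      unfolding V_def by (rule invertible_swap_plus_corner)
    show "(swap * (1 - r * T * r * (\<alpha> * \<tau>))) * V = 1"
      unfolding V_def swap_plus_corner_eq
      by (simp add: frame_simps algebra_simps swap_swap)
    have "X * q = 0"
      unfolding X_def V_def swap_def p_def by (simp add: frame_simps algebra_simps)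
    then have "X * q = 0" "X * \<tau> = 0" "X * (q * y) = 0" "X * (\<tau> * y) = 0" for y
      by (metis left_support(2) mult.assoc mult_zero_left)+
    then show "(swap * (1 - r * T * r * (\<alpha> * \<tau>))) * n = n" "n * n = 0"
      unfolding n_def \<delta>_def swap_def p_def by (simp_all add: frame_simps algebra_simps)
  qed
  moreover have "(g + r + q) * A * (g + r + q) = e + u + (V + n)"
    unfolding e_def u_def n_def \<delta>_def X_def p_def by (simp add: frame_simps algebra_simps)
  then have "A = e + u + (V + n)"
    by (simp add: sum_one)
  ultimately show ?thesis by blast
qed

end

lemma free_mod_zero: "(\<lambda>i. 0) \<in> free_mod"
  unfolding free_mod_def by simp

lemma free_mod_add: "x \<in> free_mod \<Longrightarrow> y \<in> free_mod \<Longrightarrow> (\<lambda>i. x i + y i) \<in> free_mod"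
  unfolding free_mod_def mem_Collect_eq
  by (rule finite_subset[of _ "{i. x i \<noteq> 0} \<union> {i. y i \<noteq> 0}"]) auto

lemma free_mod_uminus: "x \<in> free_mod \<Longrightarrow> (\<lambda>i. - x i) \<in> free_mod"
  unfolding free_mod_def by simp

lemma free_mod_diff: "x \<in> free_mod \<Longrightarrow> y \<in> free_mod \<Longrightarrow> (\<lambda>i. x i - y i) \<in> free_mod"
  using free_mod_add[of x "\<lambda>i. - y i"] free_mod_uminus[of y] by simp

lemma free_mod_mult_right: "x \<in> free_mod \<Longrightarrow> (\<lambda>i. x i * c) \<in> free_mod"
  unfolding free_mod_def mem_Collect_eq
  by (rule finite_subset[of _ "{i. x i \<noteq> 0}"]) auto

lemma carrier_End_ring_iff:
  "f \<in> carrier End_ring \<longleftrightarrow> is_right_endo f \<and> f \<in> extensional free_mod"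
  by (simp add: End_ring_def)

lemma restrict_in_carrier_End_ringI:
  assumes "\<And>x. x \<in> free_mod \<Longrightarrow> f x \<in> free_mod"
    and "\<And>x y. x \<in> free_mod \<Longrightarrow> y \<in> free_mod \<Longrightarrow> f (\<lambda>i. x i + y i) = (\<lambda>i. f x i + f y i)"
    and "\<And>x c. x \<in> free_mod \<Longrightarrow> f (\<lambda>i. x i * c) = (\<lambda>i. f x i * c)"
  shows "restrict f free_mod \<in> carrier End_ring"
  using assms by (simp add: carrier_End_ring_iff is_right_endo_def free_mod_add free_mod_mult_right)

typedef (overloaded) ('i, 'a) endo = "carrier (End_ring :: (('i \<Rightarrow> 'a::ring_1) \<Rightarrow> ('i \<Rightarrow> 'a)) ring)"
  by (rule exI, rule restrict_in_carrier_End_ringI[of "\<lambda>x i. 0"]) (auto simp: free_mod_zero)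

lemma Rep_endo_free_mod: "x \<in> free_mod \<Longrightarrow> Rep_endo f x \<in> free_mod"
  using Rep_endo[of f] by (simp add: carrier_End_ring_iff is_right_endo_def)

lemma Rep_endo_add:
  "x \<in> free_mod \<Longrightarrow> y \<in> free_mod \<Longrightarrow>
    Rep_endo f (\<lambda>i. x i + y i) = (\<lambda>i. Rep_endo f x i + Rep_endo f y i)"
  using Rep_endo[of f] by (simp add: carrier_End_ring_iff is_right_endo_def)

lemma Rep_endo_mult_right:
  "x \<in> free_mod \<Longrightarrow> Rep_endo f (\<lambda>i. x i * c) = (\<lambda>i. Rep_endo f x i * c)"
  using Rep_endo[of f] by (simp add: carrier_End_ring_iff is_right_endo_def)

lemma endo_eqI: "(\<And>x. x \<in> free_mod \<Longrightarrow> Rep_endo f x = Rep_endo g x) \<Longrightarrow> f = g"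
  using Rep_endo[of f] Rep_endo[of g]
  by (metis Rep_endo_inject carrier_End_ring_iff extensionalityI)

instantiation endo :: (type, ring_1) ring_1
begin

definition "0 = Abs_endo (restrict (\<lambda>x i. 0) free_mod)"
definition "1 = Abs_endo (restrict (\<lambda>x. x) free_mod)"
definition "f + g = Abs_endo (restrict (\<lambda>x i. Rep_endo f x i + Rep_endo g x i) free_mod)"
definition "- f = Abs_endo (restrict (\<lambda>x i. - Rep_endo f x i) free_mod)"
definition "f - g = Abs_endo (restrict (\<lambda>x i. Rep_endo f x i - Rep_endo g x i) free_mod)"
definition "f * g = Abs_endo (restrict (\<lambda>x. Rep_endo f (Rep_endo g x)) free_mod)"

lemma Rep_endo_ops:
  "Rep_endo 0 = restrict (\<lambda>x i. 0) free_mod"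
  "Rep_endo 1 = restrict (\<lambda>x. x) free_mod"
  "Rep_endo (f + g) = restrict (\<lambda>x i. Rep_endo f x i + Rep_endo g x i) free_mod"
  "Rep_endo (- f) = restrict (\<lambda>x i. - Rep_endo f x i) free_mod"
  "Rep_endo (f - g) = restrict (\<lambda>x i. Rep_endo f x i - Rep_endo g x i) free_mod"
  "Rep_endo (f * g) = restrict (\<lambda>x. Rep_endo f (Rep_endo g x)) free_mod"
  unfolding zero_endo_def one_endo_def plus_endo_def uminus_endo_def minus_endo_def times_endo_def
  by ((rule Abs_endo_inverse, rule restrict_in_carrier_End_ringI);
      auto simp: Rep_endo_free_mod Rep_endo_add Rep_endo_mult_right free_mod_zero free_mod_add
        free_mod_uminus free_mod_diff free_mod_mult_right algebra_simps)+

instance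
proof
  fix a b c :: "('a, 'b) endo"
  show "a * b * c = a * (b * c)" "1 * a = a" "a * 1 = a" "(a + b) * c = a * c + b * c"
    "a * (b + c) = a * b + a * c" "a + b + c = a + (b + c)" "a + b = b + a" "0 + a = a"
    "- a + a = 0" "a - b = a + - b"
    by (rule endo_eqI; simp add: Rep_endo_ops Rep_endo_free_mod Rep_endo_add algebra_simps)+
  define x :: "'a \<Rightarrow> 'b" where "x = (\<lambda>i. if i = undefined then 1 else 0)"
  have "x \<in> free_mod"
    unfolding free_mod_def x_def by (simp add: finite_subset[of _ "{undefined}"])
  then have "Rep_endo (0::('a, 'b) endo) x \<noteq> Rep_endo 1 x"
    by (simp add: Rep_endo_ops x_def fun_eq_iff)
  then show "(0::('a, 'b) endo) \<noteq> 1"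
    by metis
qed

end

lemma range_Rep_endo: "range Rep_endo = carrier End_ring"
  by (rule type_definition.Rep_range[OF type_definition_endo])

lemma End_ring_Rep_endo_ops:
  "Rep_endo x \<otimes>\<^bsub>End_ring\<^esub> Rep_endo y = Rep_endo (x * y)"
  "Rep_endo x \<oplus>\<^bsub>End_ring\<^esub> Rep_endo y = Rep_endo (x + y)"
  "\<zero>\<^bsub>End_ring\<^esub> = Rep_endo 0"
  "\<one>\<^bsub>End_ring\<^esub> = Rep_endo 1"
  by (simp_all add: End_ring_def Rep_endo_ops)

lemma abelian_monoid_End_ring: "abelian_monoid (End_ring :: (('i \<Rightarrow> 'a::ring_1) \<Rightarrow> _) ring)"
  by (rule abelian_monoidI)
    (auto simp: End_ring_Rep_endo_ops add_ac simp flip: range_Rep_endo)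

lemma Rep_endo_Units:
  assumes "is_invertible u"
  shows "Rep_endo u \<in> Units End_ring"
proof -
  obtain v where "u * v = 1" "v * u = 1"
    using assms unfolding is_invertible_def by blast
  then have "Rep_endo v \<otimes>\<^bsub>End_ring\<^esub> Rep_endo u = \<one>\<^bsub>End_ring\<^esub>"
    "Rep_endo u \<otimes>\<^bsub>End_ring\<^esub> Rep_endo v = \<one>\<^bsub>End_ring\<^esub>"
    by (simp_all add: End_ring_Rep_endo_ops)
  then show ?thesis
    unfolding Units_def using Rep_endo by blast
qed

lemma n_clean_ring_End_ringI:
  assumes "\<And>X :: ('i, 'a) endo.
    \<exists>e u v. e * e = e \<and> is_invertible u \<and> is_invertible v \<and> X = e + u + v"
  shows "n_clean_ring 2 (End_ring :: (('i \<Rightarrow> 'a::ring_1) \<Rightarrow> _) ring)"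
  unfolding n_clean_ring_def
proof
  interpret abelian_monoid "End_ring :: (('i \<Rightarrow> 'a) \<Rightarrow> _) ring"
    by (rule abelian_monoid_End_ring)
  fix x :: "('i \<Rightarrow> 'a) \<Rightarrow> ('i \<Rightarrow> 'a)"
  assume "x \<in> carrier End_ring"
  then obtain X where x: "x = Rep_endo X"
    by (auto simp flip: range_Rep_endo)
  obtain e u v where euv: "e * e = e" "is_invertible u" "is_invertible v" "X = e + u + v"
    using assms by blast
  define w where "w = (\<lambda>k::nat. Rep_endo (if k = 0 then u else v))"
  have "(\<Oplus>\<^bsub>End_ring\<^esub>k\<in>{..<2}. w k) = Rep_endo (v + u)"
    by (simp add: numeral_2_eq_2 lessThan_Suc_atMost w_def Pi_def End_ring_Rep_endo_ops
        flip: range_Rep_endo)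
  then have "x = Rep_endo e \<oplus>\<^bsub>End_ring\<^esub> (\<Oplus>\<^bsub>End_ring\<^esub>k\<in>{..<2}. w k)"
    by (simp add: x euv(4) End_ring_Rep_endo_ops add_ac)
  moreover have "\<forall>k<2. w k \<in> Units End_ring"
    by (simp add: w_def euv Rep_endo_Units)
  moreover have "Rep_endo e \<otimes>\<^bsub>End_ring\<^esub> Rep_endo e = Rep_endo e"
    by (simp add: End_ring_Rep_endo_ops euv(1))
  ultimately show "n_clean_elem 2 End_ring x"
    unfolding n_clean_elem_def by (metis Rep_endo)
qed

definition partial_perm :: "'i set \<Rightarrow> ('i \<Rightarrow> 'i) \<Rightarrow> ('i, 'a::ring_1) endo" where
  "partial_perm S f = Abs_endo (restrict (\<lambda>x i. if i \<in> S then x (f i) else 0) free_mod)"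

lemma free_mod_reindex:
  assumes "inj_on f S" "x \<in> free_mod"
  shows "(\<lambda>i. if i \<in> S then x (f i) else 0) \<in> free_mod"
proof -
  have "finite (f -` {j. x j \<noteq> 0} \<inter> S)"
    using assms by (intro finite_vimage_IntI) (simp_all add: free_mod_def)
  then show ?thesis
    unfolding free_mod_def by (auto elim: rev_finite_subset)
qed

lemma Rep_endo_partial_perm:
  "inj_on f S \<Longrightarrow>
    Rep_endo (partial_perm S f) = restrict (\<lambda>x i. if i \<in> S then x (f i) else 0) free_mod"
  unfolding partial_perm_def
  by (rule Abs_endo_inverse, rule restrict_in_carrier_End_ringI) (auto simp: free_mod_reindex)

lemma partial_perm_mult:
  assumes "inj_on f S" "inj_on f' S'"
  shows "partial_perm S f * partial_perm S' f' = partial_perm {i \<in> S. f i \<in> S'} (f' \<circ> f)"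
proof -
  have "inj_on (f' \<circ> f) {i \<in> S. f i \<in> S'}"
    using assms by (auto simp: inj_on_def)
  then show ?thesis
    using assms by (intro endo_eqI) (auto simp: Rep_endo_ops Rep_endo_partial_perm free_mod_reindex)
qed

lemma partial_perm_cong:
  "S = S' \<Longrightarrow> (\<And>i. i \<in> S \<Longrightarrow> f i = f' i) \<Longrightarrow> partial_perm S f = partial_perm S' f'"
  unfolding partial_perm_def by (metis (mono_tags) restrict_ext)

lemma partial_perm_empty: "partial_perm {} f = 0"
  unfolding partial_perm_def zero_endo_def by simp

lemma partial_perm_add:
  assumes "S \<inter> S' = {}"
  shows "partial_perm S id + partial_perm S' id = partial_perm (S \<union> S') id"
  using assms by (intro endo_eqI) (auto simp: Rep_endo_ops Rep_endo_partial_perm fun_eq_iff)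

lemma partial_perm_UNIV: "partial_perm UNIV id = 1"
  unfolding partial_perm_def one_endo_def by simp

lemma partial_perm_mult_eq:
  assumes "inj_on f S" "inj_on f' S'"
    and "{i \<in> S. f i \<in> S'} = S''" "\<And>i. i \<in> S'' \<Longrightarrow> f' (f i) = f'' i"
  shows "partial_perm S f * partial_perm S' f' = partial_perm S'' f''"
  unfolding partial_perm_mult[OF assms(1,2)] using assms(3,4) by (intro partial_perm_cong) auto

lemma partial_perm_mult_eq_0:
  assumes "inj_on f S" "inj_on f' S'" "{i \<in> S. f i \<in> S'} = {}"
  shows "partial_perm S f * partial_perm S' f' = 0"
  unfolding partial_perm_mult[OF assms(1,2)] assms(3) by (rule partial_perm_empty)

lemma idempotent_frame_partial_perm:
  assumes "G \<inter> R = {}" "G \<inter> Q = {}" "R \<inter> Q = {}" "G \<union> R \<union> Q = UNIV"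
    and "bij_betw h Q G" "inj_on k R" "k ` R \<subseteq> Q"
  shows "idempotent_frame (partial_perm G id) (partial_perm R id) (partial_perm Q id)
    (partial_perm G (inv_into Q h)) (partial_perm Q h) (partial_perm R k)
    (partial_perm (k ` R) (inv_into R k) :: ('i, 'a::ring_1) endo)"
proof -
  have inj: "inj_on id S" "inj_on (inv_into Q h) G" "inj_on h Q" "inj_on k R"
    "inj_on (inv_into R k) (k ` R)" for S
    using assms(5,6) by (simp_all add: bij_betw_def inj_on_inv_into)
  have sum: "partial_perm G id + partial_perm R id + partial_perm Q id = (1::('i, 'a) endo)"
    using assms(1-4) by (simp add: partial_perm_add Int_Un_distrib2 partial_perm_UNIV)
  show ?thesis
    by (unfold_locales; (rule sum partial_perm_mult_eq partial_perm_mult_eq_0; (rule inj)?);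
        use assms in \<open>auto simp: bij_betw_def inv_into_into f_inv_into_f\<close>)
qed

lemma split_index_set:
  assumes "\<exists>i j :: 'i. i \<noteq> j"
  obtains G R Q :: "'i set"
  where "G \<inter> R = {}" "G \<inter> Q = {}" "R \<inter> Q = {}" "G \<union> R \<union> Q = UNIV" "Q \<approx> G" "R \<lesssim> Q"
proof (cases "finite (UNIV :: 'i set)")
  case True
  define m where "m = card (UNIV :: 'i set) div 2"
  obtain i j :: 'i where "i \<noteq> j"
    using assms by blast
  then have "2 \<le> card (UNIV :: 'i set)"
    using card_mono[OF True, of "{i, j}"] by simp
  then have m: "1 \<le> m" "m \<le> card (UNIV :: 'i set) - m"
    unfolding m_def by linarith+
  obtain Q :: "'i set" where Q: "card Q = m"
    using obtain_subset_with_card_n[of m UNIV] m by (metis diff_le_self le_trans)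
  have "card (UNIV - Q) = card (UNIV :: 'i set) - m"
    using True Q by (simp add: card_Diff_subset finite_subset[OF subset_UNIV])
  then obtain G where G: "G \<subseteq> UNIV - Q" "card G = m"
    using obtain_subset_with_card_n[of m "UNIV - Q"] m by auto
  define R where "R = UNIV - (G \<union> Q)"
  have "card (G \<union> Q) = m + m"
    using True G Q by (subst card_Un_disjoint) (auto intro: finite_subset)
  then have "card R = card (UNIV :: 'i set) - m - m"
    using True unfolding R_def by (simp add: card_Diff_subset finite_subset[OF subset_UNIV])
  then have "card R \<le> card Q"
    using Q m unfolding m_def by linarith
  with G Q True have "Q \<approx> G" "R \<lesssim> Q"
    by (simp_all add: eqpoll_iff_card lepoll_iff_card_le finite_subset[OF subset_UNIV])
  with G show ?thesis
    by (intro that[of G R Q]) (auto simp: R_def)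
next
  case False
  have "(UNIV :: 'i set) <+> (UNIV :: 'i set) \<approx> (UNIV :: 'i set)"
    unfolding eqpoll_iff_card_of_ordIso
    by (rule card_of_Plus_infinite1[OF False ordIso_imp_ordLeq[OF card_of_refl]])
  then obtain f :: "'i + 'i \<Rightarrow> 'i" where f: "bij f"
    by (auto simp: eqpoll_def)
  define G where "G = range (f \<circ> Inl)"
  define Q where "Q = range (f \<circ> Inr)"
  have "inj (f \<circ> Inl)" "inj (f \<circ> Inr)"
    using f by (simp_all add: bij_is_inj inj_compose)
  then have "Q \<approx> G"
    unfolding G_def Q_def
    by (meson eqpoll_sym eqpoll_trans inj_on_image_eqpoll_self)
  moreover have "G \<inter> Q = {}"
    using f unfolding G_def Q_def by (auto simp: bij_def inj_eq)
  moreover have "G \<union> Q = f ` (range Inl \<union> range Inr)"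
    unfolding G_def Q_def by (simp add: image_Un image_comp)
  then have "G \<union> Q = UNIV"
    using f by (simp add: UNIV_sum[symmetric] bij_is_surj)
  ultimately show ?thesis
    by (intro that[of G "{}" Q]) auto
qed

lemma ex_idempotent_frame_endo:
  assumes "\<exists>i j :: 'i. i \<noteq> j"
  shows "\<exists>g r q \<sigma> \<tau> \<alpha> \<beta> :: ('i, 'a::ring_1) endo. idempotent_frame g r q \<sigma> \<tau> \<alpha> \<beta>"
proof -
  obtain G R Q :: "'i set"
    where split: "G \<inter> R = {}" "G \<inter> Q = {}" "R \<inter> Q = {}" "G \<union> R \<union> Q = UNIV"
      and "Q \<approx> G" "R \<lesssim> Q"
    using split_index_set[OF assms] by blast
  then obtain h k where "bij_betw h Q G" "inj_on k R" "k ` R \<subseteq> Q"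
    unfolding eqpoll_def lepoll_def by blast
  with split show ?thesis
    using idempotent_frame_partial_perm by blast
qed

theorem theorem7:
  assumes "\<exists>i j :: 'i. i \<noteq> j"
  shows "n_clean_ring 2 (End_ring :: (('i \<Rightarrow> 'a::ring_1) \<Rightarrow> ('i \<Rightarrow> 'a)) ring)"
proof (rule n_clean_ring_End_ringI)
  obtain g r q \<sigma> \<tau> \<alpha> \<beta> :: "('i, 'a) endo" where "idempotent_frame g r q \<sigma> \<tau> \<alpha> \<beta>"
    using ex_idempotent_frame_endo[OF assms] by blast
  then show "\<exists>e u v. e * e = e \<and> is_invertible u \<and> is_invertible v \<and> X = e + u + v"
    for X :: "('i, 'a) endo"
    by (rule idempotent_frame.idempotent_plus_two_invertibles)
qed

end
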